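(* Let $\mathcal{A}$, the generators $h_{\boldsymbol{j}}$, the graph $G_M$, the charges $Q_M^{(k)}$ and $H_M$ be as in the context, and assume the extra relation $A_{2m-1}C_{2m+2}=C_{2m}A_{2m+3}$ holds for all integers $m$ with $2\le m\le \lfloor M/2\rfloor-2$. Then $[H_M,Q_M^{(k)}]=0$ for every integer $k\ge 0$.
   Context: Extended FFD setting. Fix an integer $M\ge 1$ and complex numbers $b_1,\dots,b_M$ and $\bar b_{2m+1}$ for $0\le m\le\lfloor M/2\rfloor$. Let $\mathcal{A}$ be a unital associative complex algebra containing elements $h_1,\dots,h_M$ and $\bar h_{1},\bar h_3,\dots,\bar h_{2\lfloor M/2\rfloor+1}$ (the "generators"; write $h_{\overline{2m+1}}:=\bar h_{2m+1}$), with $h_j^2=b_j^2\,\mathbb{1}$ and $\bar h_{2m+1}^2=\bar b_{2m+1}^2\,\mathbb{1}$. Define the frustration graph $G_M=(V_M,E_M)$ whose vertices are the generators and whose edges are: $h_i\sim h_j$ iff $|i-j|\in\{1,2\}$; $\bar h_{2m-1}\sim h_j$ iff $j\in\{2m-7,2m-5,2m-3,2m-1,2m-2,2m\}$; $\bar h_{2m-1}\sim\bar h_{2m'-1}$ iff $|m-m'|=1$. Assume adjacent generators anticommute and distinct non-adjacent generators commute. Any symbol $h_j$ or $\bar h_j$ whose index lies outside the ranges above denotes $0$. Define $A_{2m-1}:=h_{2m}h_{2m-3}+h_{2m-2}\bar h_{2m+1}$ and $C_{2m}:=h_{2m-3}\bar h_{2m+3}$. An independent set is a set of vertices of $G_M$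 no two of which are adjacent; for an independent set $S$, $h_S:=\prod_{v\in S}h_v$ (the factors commute, so the order is irrelevant), $h_\emptyset=\mathbb{1}$. The charges are $Q_M^{(k)}:=\sum_{S\text{ independent},\,|S|=k}h_S$ ($Q_M^{(0)}=\mathbb{1}$), and $H_M:=Q_M^{(1)}=\sum_{j=1}^M h_j+\sum_{m=0}^{\lfloor M/2\rfloor}\bar h_{2m+1}$. *)

theory Defs
  imports Complex_Main
begin

text \<open>Generators: GH j is h_j, GB j is the barred generator \<open>bar h_j\<close> (j odd).\<close>
datatype gen = GH int | GB int

definition verts :: "int \<Rightarrow> gen set" where
  "verts M = {GH j | j. 1 \<le> j \<and> j \<le> M} \<union> {GB (2*m+1) | m. 0 \<le> m \<and> m \<le> M div 2}"

fun adj0 :: "gen \<Rightarrow> gen \<Rightarrow> bool" where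
  "adj0 (GH i) (GH j) = (\<bar>i - j\<bar> \<in> {1, 2})"
| "adj0 (GB a) (GH j) = (\<exists>m. a = 2*m - 1 \<and> j \<in> {2*m-7, 2*m-5, 2*m-3, 2*m-1, 2*m-2, 2*m})"
| "adj0 (GB a) (GB b) = (\<exists>m m'. a = 2*m - 1 \<and> b = 2*m' - 1 \<and> \<bar>m - m'\<bar> = 1)"
| "adj0 (GH j) (GB a) = False"

definition adj :: "gen \<Rightarrow> gen \<Rightarrow> bool" where
  "adj u v = (adj0 u v \<or> adj0 v u)"

definition indep :: "int \<Rightarrow> gen set \<Rightarrow> bool" where
  "indep M S = (S \<subseteq> verts M \<and> (\<forall>u\<in>S. \<forall>v\<in>S. \<not> adj u v))"

text \<open>Product of the (pairwise commuting) factors h_v, v in S, taken in some enumeration order.\<close>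
definition hprod :: "(gen \<Rightarrow> 'a::ring_1) \<Rightarrow> gen set \<Rightarrow> 'a" where
  "hprod h S = foldr (*) (map h (SOME xs. distinct xs \<and> set xs = S)) 1"

definition charge :: "int \<Rightarrow> (gen \<Rightarrow> 'a::ring_1) \<Rightarrow> nat \<Rightarrow> 'a" where
  "charge M h k = (\<Sum>S\<in>{S. indep M S \<and> card S = k}. hprod h S)"

text \<open>Generators with out-of-range indices denote 0.\<close>
definition hh :: "int \<Rightarrow> (gen \<Rightarrow> 'a::ring_1) \<Rightarrow> int \<Rightarrow> 'a" where
  "hh M h j = (if GH j \<in> verts M then h (GH j) else 0)"

definition hb :: "int \<Rightarrow> (gen \<Rightarrow> 'a::ring_1) \<Rightarrow> int \<Rightarrow> 'a" where
  "hb M h j = (if GB j \<in> verts M then h (GB j) else 0)"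

text \<open>A_{2m-1} and C_{2m}, parametrised by m.\<close>
definition Aop :: "int \<Rightarrow> (gen \<Rightarrow> 'a::ring_1) \<Rightarrow> int \<Rightarrow> 'a" where
  "Aop M h m = hh M h (2*m) * hh M h (2*m-3) + hh M h (2*m-2) * hb M h (2*m+1)"

definition Cop :: "int \<Rightarrow> (gen \<Rightarrow> 'a::ring_1) \<Rightarrow> int \<Rightarrow> 'a" where
  "Cop M h m = hh M h (2*m-3) * hb M h (2*m+3)"

end

theory Submission
  imports Defs "HOL-Library.Disjoint_Sets"
begin

text \<open>Write \<open>H_M = \<Sum>\<^sub>v h_v\<close>. Moving \<open>h_v\<close> across \<open>h_S\<close> costs one sign per neighbour of
  \<open>v\<close> in \<open>S\<close>, so \<open>[H_M, Q_M^(k)]\<close> is twice the sum of \<open>h_v h_S\<close> over the pairs \<open>(v, S)\<close>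
  in which \<open>v\<close> has an odd number of neighbours in the independent set \<open>S\<close>. In \<open>G_M\<close> no
  neighbourhood contains four independent vertices, so this number is 1 or 3. The pairs with one
  neighbour \<open>u\<close> cancel under \<open>(v, S) \<mapsto> (u, S - {u} \<union> {v})\<close>, which flips the sign of
  \<open>h_v h_S\<close>. A pair with three neighbours is a claw at \<open>v\<close> plus an independent set far from it;
  the claws come in groups of four sharing their closed neighbourhood, and the four claw terms of
  a group sum to \<open>A_{2m-1} C_{2m+2} - C_{2m} A_{2m+3}\<close>, which vanishes by hypothesis.\<close>

section \<open>The frustration graph\<close>

lemma adj_GH_GH [simp]: "adj (GH i) (GH j) \<longleftrightarrow> \<bar>i - j\<bar> = 1 \<or> \<bar>i - j\<bar> = 2"
  by (auto simp: adj_def abs_minus_commute)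

lemma adj0_GB_GH_iff:
  "adj0 (GB a) (GH j) \<longleftrightarrow> odd a \<and> (j = a-6 \<or> j = a-4 \<or> j = a-2 \<or> j = a \<or> j = a-1 \<or> j = a+1)"
  by simp presburger

lemma adj_GB_GH [simp]:
  "adj (GB a) (GH j) \<longleftrightarrow> odd a \<and> (j = a-6 \<or> j = a-4 \<or> j = a-2 \<or> j = a \<or> j = a-1 \<or> j = a+1)"
  unfolding adj_def adj0_GB_GH_iff by simp

lemma adj_GH_GB [simp]:
  "adj (GH j) (GB a) \<longleftrightarrow> odd a \<and> (j = a-6 \<or> j = a-4 \<or> j = a-2 \<or> j = a \<or> j = a-1 \<or> j = a+1)"
  unfolding adj_def adj0_GB_GH_iff by simp

lemma adj0_GB_GB_iff: "adj0 (GB a) (GB c) \<longleftrightarrow> odd a \<and> (c = a - 2 \<or> c = a + 2)"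
  by simp presburger

lemma adj_GB_GB [simp]: "adj (GB a) (GB c) \<longleftrightarrow> odd a \<and> (c = a - 2 \<or> c = a + 2)"
  unfolding adj_def adj0_GB_GB_iff by auto

lemma adj_sym: "adj u v \<longleftrightarrow> adj v u"
  by (auto simp: adj_def)

lemma adj_irrefl [simp]: "\<not> adj v v"
  by (cases v) auto

lemma GH_in_verts [simp]: "GH j \<in> verts M \<longleftrightarrow> 1 \<le> j \<and> j \<le> M"
  by (auto simp: verts_def)

lemma GB_in_verts [simp]: "GB a \<in> verts M \<longleftrightarrow> odd a \<and> 1 \<le> a \<and> a \<le> 2 * (M div 2) + 1"
  by (auto simp: verts_def elim!: oddE)

lemma finite_verts: "finite (verts M)"
proof -
  have "verts M = GH ` {1..M} \<union> (\<lambda>m. GB (2*m+1)) ` {0..M div 2}"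
    by (auto simp: verts_def)
  then show ?thesis by simp
qed

lemma indep_subset: "indep M S \<Longrightarrow> T \<subseteq> S \<Longrightarrow> indep M T"
  by (auto simp: indep_def)

lemma indep_finite: "indep M S \<Longrightarrow> finite S"
  using finite_verts unfolding indep_def by (auto intro: finite_subset)

definition nbhd :: "gen \<Rightarrow> gen set" where
  "nbhd v = {u. adj v u}"

lemma adj_GH_odd_iff: "adj (GH (2*m-1)) u \<longleftrightarrow>
    u \<in> {GH(2*m-3), GH(2*m-2), GH(2*m), GH(2*m+1), GB(2*m-1), GB(2*m+1), GB(2*m+3), GB(2*m+5)}"
  by (cases u; simp; presburger)

lemma adj_GH_even_iff: "adj (GH (2*m)) u \<longleftrightarrow>
    u \<in> {GH(2*m-2), GH(2*m-1), GH(2*m+1), GH(2*m+2), GB(2*m-1), GB(2*m+1)}"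
  by (cases u; simp; presburger)

lemma adj_GB_odd_iff: "adj (GB (2*m+3)) u \<longleftrightarrow>
    u \<in> {GH(2*m-3), GH(2*m-1), GH(2*m+1), GH(2*m+2), GH(2*m+3), GH(2*m+4), GB(2*m+1), GB(2*m+5)}"
  by (cases u; simp; presburger)

lemma not_adj_GB_even: "even a \<Longrightarrow> \<not> adj (GB a) u"
  by (cases u) auto

section \<open>Claws\<close>

definition is_claw :: "gen \<Rightarrow> gen \<Rightarrow> gen \<Rightarrow> gen \<Rightarrow> bool" where
  "is_claw v x y z \<longleftrightarrow> adj v x \<and> adj v y \<and> adj v z \<and> x \<noteq> y \<and> x \<noteq> z \<and> y \<noteq> z
     \<and> \<not> adj x y \<and> \<not> adj x z \<and> \<not> adj y z"

text \<open>The claws of \<open>G_M\<close> come in groups of four indexed by \<open>m\<close>, one for each monomial of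
  \<open>A_{2m-1} C_{2m+2}\<close> and of \<open>C_{2m} A_{2m+3}\<close>.\<close>

definition claw_centre :: "nat \<Rightarrow> int \<Rightarrow> gen" where
  "claw_centre i m = (if i < 2 then GH (2*m-1) else GB (2*m+3))"

definition claw_leaves :: "nat \<Rightarrow> int \<Rightarrow> gen set" where
  "claw_leaves i m =
    (if i = 0 then {GH(2*m-3), GH(2*m), GB(2*m+5)}
     else if i = 1 then {GH(2*m-2), GB(2*m+1), GB(2*m+5)}
     else if i = 2 then {GH(2*m-3), GH(2*m+1), GH(2*m+4)}
     else {GH(2*m-3), GH(2*m+2), GB(2*m+5)})"

definition closed_claw :: "nat \<Rightarrow> int \<Rightarrow> gen set" where
  "closed_claw i m = insert (claw_centre i m) (claw_leaves i m)"

fun leaf_triples :: "gen \<Rightarrow> gen set set" where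
  "leaf_triples (GH j) =
    (if odd j then {claw_leaves 0 ((j+1) div 2), claw_leaves 1 ((j+1) div 2)} else {})"
| "leaf_triples (GB a) =
    (if odd a then {claw_leaves 2 ((a-3) div 2), claw_leaves 3 ((a-3) div 2)} else {})"

lemma finite_leaf_triples: "finite (leaf_triples v)"
  by (cases v) auto

lemma card_leaf_triples: "card (leaf_triples v) \<le> 2"
proof -
  have "card {A, B} \<le> 2" for A B :: "gen set"
    by (cases "A = B") auto
  then show ?thesis
    by (cases v) auto
qed

lemma triple_eq_card_3:
  "x \<noteq> y \<Longrightarrow> x \<noteq> z \<Longrightarrow> y \<noteq> z \<Longrightarrow> x \<in> A \<Longrightarrow> y \<in> A \<Longrightarrow> z \<in> A \<Longrightarrow> card A = 3 \<Longrightarrow> {x,y,z} = A"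
  by (rule card_subset_eq) (auto intro: card_ge_0_finite)

lemma claw_at_GH_odd:
  assumes "is_claw (GH (2*m-1)) x y z"
  shows "{x,y,z} = claw_leaves 0 m \<or> {x,y,z} = claw_leaves 1 m"
proof -
  let ?P = "{GH(2*m-3), GH(2*m), GB(2*m+5)}" and ?Q = "{GH(2*m-2), GB(2*m+1), GB(2*m+5)}"
  have d: "x \<noteq> y" "x \<noteq> z" "y \<noteq> z"
    using assms by (auto simp: is_claw_def)
  have "(x \<in> ?P \<and> y \<in> ?P \<and> z \<in> ?P) \<or> (x \<in> ?Q \<and> y \<in> ?Q \<and> z \<in> ?Q)"
    using assms unfolding is_claw_def adj_GH_odd_iff by (elim conjE insertE emptyE) simp_all
  moreover have "card ?P = 3" "card ?Q = 3"
    by simp_all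
  ultimately have "{x,y,z} = ?P \<or> {x,y,z} = ?Q"
    using triple_eq_card_3[OF d] by metis
  then show ?thesis
    by (simp add: claw_leaves_def)
qed

lemma no_claw_at_GH_even: "\<not> is_claw (GH (2*m)) x y z"
  unfolding is_claw_def adj_GH_even_iff by clarify (elim conjE insertE emptyE; simp)

lemma claw_at_GB_odd:
  assumes "is_claw (GB (2*m+3)) x y z"
  shows "{x,y,z} = claw_leaves 2 m \<or> {x,y,z} = claw_leaves 3 m"
proof -
  let ?P = "{GH(2*m-3), GH(2*m+1), GH(2*m+4)}" and ?Q = "{GH(2*m-3), GH(2*m+2), GB(2*m+5)}"
  have d: "x \<noteq> y" "x \<noteq> z" "y \<noteq> z"
    using assms by (auto simp: is_claw_def)
  have "(x \<in> ?P \<and> y \<in> ?P \<and> z \<in> ?P) \<or> (x \<in> ?Q \<and> y \<in> ?Q \<and> z \<in> ?Q)"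
    using assms unfolding is_claw_def adj_GB_odd_iff by (elim conjE insertE emptyE) simp_all
  moreover have "card ?P = 3" "card ?Q = 3"
    by simp_all
  ultimately have "{x,y,z} = ?P \<or> {x,y,z} = ?Q"
    using triple_eq_card_3[OF d] by metis
  then show ?thesis
    by (simp add: claw_leaves_def)
qed

lemma claw_in_leaf_triples:
  assumes "is_claw v x y z"
  shows "{x,y,z} \<in> leaf_triples v"
proof (cases v)
  case (GH j)
  show ?thesis
  proof (cases "odd j")
    case True
    then have "j = 2 * ((j+1) div 2) - 1" by presburger
    then show ?thesis
      using claw_at_GH_odd[of "(j+1) div 2"] assms GH True by auto
  next
    case False
    then have "j = 2 * (j div 2)" by presburger
    then show ?thesis
      using no_claw_at_GH_even[of "j div 2"] assms GH by metis
  qed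
next
  case (GB a)
  show ?thesis
  proof (cases "odd a")
    case True
    then have "a = 2 * ((a-3) div 2) + 3" by presburger
    then show ?thesis
      using claw_at_GB_odd[of "(a-3) div 2"] assms GB True by auto
  next
    case False
    then show ?thesis
      using not_adj_GB_even assms GB by (auto simp: is_claw_def)
  qed
qed

lemma leaf_triples_claw_leaves:
  assumes "T \<in> leaf_triples v"
  obtains i m where "i < 4" "v = claw_centre i m" "T = claw_leaves i m"
proof (cases v)
  case (GH j)
  define m where "m = (j+1) div 2"
  from assms GH have j: "odd j" "T = claw_leaves 0 m \<or> T = claw_leaves 1 m"
    by (auto simp: m_def split: if_splits)
  have "j = 2*m - 1"
    using j(1) unfolding m_def by presburger
  then have "v = claw_centre 0 m" "v = claw_centre 1 m"
    using GH by (simp_all add: claw_centre_def)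
  then show ?thesis
    using that[of 0 m] that[of 1 m] j(2) by fastforce
next
  case (GB a)
  define m where "m = (a-3) div 2"
  from assms GB have a: "odd a" "T = claw_leaves 2 m \<or> T = claw_leaves 3 m"
    by (auto simp: m_def split: if_splits)
  have "a = 2*m + 3"
    using a(1) unfolding m_def by presburger
  then have "v = claw_centre 2 m" "v = claw_centre 3 m"
    using GB by (simp_all add: claw_centre_def)
  then show ?thesis
    using that[of 2 m] that[of 3 m] a(2) by fastforce
qed

text \<open>Every 3-subset of \<open>S \<inter> nbhd v\<close> is the leaf set of a claw at \<open>v\<close>, and there are at most
  two of those.\<close>

lemma card_indep_inter_nbhd_le_3:
  assumes "indep M S"
  shows "card (S \<inter> nbhd v) \<le> 3"
proof (rule ccontr)
  assume big: "\<not> ?thesis"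
  have fin: "finite (S \<inter> nbhd v)"
    using indep_finite[OF assms] by simp
  have sub: "{T. T \<subseteq> S \<inter> nbhd v \<and> card T = 3} \<subseteq> leaf_triples v"
  proof safe
    fix T assume T: "T \<subseteq> S \<inter> nbhd v" "card T = 3"
    then obtain x y z where xyz: "T = {x,y,z}" "x \<noteq> y" "x \<noteq> z" "y \<noteq> z"
      by (auto simp: card_3_iff)
    have "is_claw v x y z"
      using T(1) assms xyz unfolding is_claw_def indep_def nbhd_def by blast
    then show "T \<in> leaf_triples v"
      using claw_in_leaf_triples xyz(1) by simp
  qed
  have "4 choose 3 \<le> card (S \<inter> nbhd v) choose 3"
    using big by (intro binomial_right_mono) simp
  also have "\<dots> = card {T. T \<subseteq> S \<inter> nbhd v \<and> card T = 3}"
    using n_subsets[OF fin] by simp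
  also have "\<dots> \<le> card (leaf_triples v)"
    by (rule card_mono[OF finite_leaf_triples sub])
  also have "\<dots> \<le> 2"
    by (rule card_leaf_triples)
  finally show False
    by (simp add: eval_nat_numeral)
qed

definition near_claw :: "int \<Rightarrow> gen \<Rightarrow> bool" where
  "near_claw m w = (case w of
      GH j \<Rightarrow> 2*m-5 \<le> j \<and> j \<le> 2*m+6
    | GB a \<Rightarrow> odd a \<and> 2*m-3 \<le> a \<and> a \<le> 2*m+7)"

lemma less_4_cases: "(i::nat) < 4 \<Longrightarrow> i = 0 \<or> i = 1 \<or> i = 2 \<or> i = 3"
  by auto

lemma closed_claw_nbhd_iff_near_claw:
  assumes "i < 4"
  shows "(w \<in> closed_claw i m \<or> (\<exists>t\<in>closed_claw i m. adj t w)) \<longleftrightarrow> near_claw m w"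
  using less_4_cases[OF assms]
  by (elim disjE; cases w; simp add: closed_claw_def claw_leaves_def claw_centre_def near_claw_def;
      presburger)

lemma claw_leaves_adj_centre: "i < 4 \<Longrightarrow> t \<in> claw_leaves i m \<Longrightarrow> adj (claw_centre i m) t"
  by (drule less_4_cases) (elim disjE; auto simp: claw_leaves_def claw_centre_def; presburger)

lemma claw_leaves_not_adj: "i < 4 \<Longrightarrow> t \<in> claw_leaves i m \<Longrightarrow> u \<in> claw_leaves i m \<Longrightarrow> \<not> adj t u"
  by (drule less_4_cases) (elim disjE; auto simp: claw_leaves_def; presburger)

lemma card_claw_leaves: "i < 4 \<Longrightarrow> card (claw_leaves i m) = 3"
  by (drule less_4_cases) (elim disjE; simp add: claw_leaves_def)

lemma claw_inj:
  assumes "i < 4" "i' < 4" "claw_centre i m = claw_centre i' m'" "claw_leaves i m = claw_leaves i' m'"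
  shows "i = i'" "m = m'"
proof -
  show m: "m = m'"
    using assms(3) by (auto simp: claw_centre_def split: if_splits)
  have "(i < 2) = (i' < 2)"
    using assms(3) by (auto simp: claw_centre_def split: if_splits)
  moreover have "GH (2*m-3) \<in> claw_leaves 0 m" "GH (2*m-3) \<notin> claw_leaves 1 m"
      "GH (2*m+1) \<in> claw_leaves 2 m" "GH (2*m+1) \<notin> claw_leaves 3 m"
    by (simp_all add: claw_leaves_def)
  ultimately show "i = i'"
    using less_4_cases[OF assms(1)] less_4_cases[OF assms(2)] assms(4) m
    by (elim disjE) (simp_all only: One_nat_def[symmetric], auto)
qed

lemma closed_claw_in_verts_range:
  assumes "i < 4" "closed_claw i m \<subseteq> verts M"
  shows "2 \<le> m \<and> m \<le> M div 2 - 2"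
  using less_4_cases[OF assms(1)] assms(2)
  by (elim disjE; simp add: closed_claw_def claw_leaves_def claw_centre_def) presburger+

section \<open>Commuting generators and their products\<close>

lemma hprod_empty [simp]: "hprod h {} = 1"
  unfolding hprod_def by (subst some_equality[of _ "[]"]) auto

lemma hprod_singleton [simp]: "hprod h {v} = h v"
proof -
  have "xs = [v]" if "distinct xs" "set xs = {v}" for xs
  proof -
    have "length xs = 1"
      using distinct_card[OF that(1)] that(2) by simp
    then obtain a where "xs = [a]"
      by (auto simp: length_Suc_conv)
    then show ?thesis
      using that(2) by simp
  qed
  then show ?thesis
    unfolding hprod_def by (subst some_equality[of _ "[v]"]) auto
qed

lemma charge_one: "charge M h 1 = (\<Sum>v\<in>verts M. h v)"
proof -
  have "{S. indep M S \<and> card S = 1} = (\<lambda>v. {v}) ` verts M"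
    by (auto simp: indep_def card_1_singleton_iff)
  then have "charge M h 1 = (\<Sum>S\<in>(\<lambda>v. {v}) ` verts M. hprod h S)"
    by (simp add: charge_def)
  also have "\<dots> = (\<Sum>v\<in>verts M. h v)"
    by (subst sum.reindex) (auto simp: inj_on_def)
  finally show ?thesis .
qed

locale ffd_generators =
  fixes M :: int and h :: "gen \<Rightarrow> 'a::ring_1"
  assumes anticommute: "\<And>u v. u \<in> verts M \<Longrightarrow> v \<in> verts M \<Longrightarrow> adj u v \<Longrightarrow> h u * h v = - (h v * h u)"
    and commute: "\<And>u v. u \<in> verts M \<Longrightarrow> v \<in> verts M \<Longrightarrow> u \<noteq> v \<Longrightarrow> \<not> adj u v \<Longrightarrow> h u * h v = h v * h u"
begin

lemma commute_if_not_adj: "u \<in> verts M \<Longrightarrow> v \<in> verts M \<Longrightarrow> \<not> adj u v \<Longrightarrow> h u * h v = h v * h u"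
  by (cases "u = v") (auto intro: commute)

lemma foldr_mult_remove1:
  assumes "distinct xs" "indep M (set xs)" "x \<in> set xs"
  shows "foldr (*) (map h xs) 1 = h x * foldr (*) (map h (remove1 x xs)) 1"
  using assms
proof (induction xs)
  case Nil
  then show ?case by simp
next
  case (Cons y ys)
  show ?case
  proof (cases "y = x")
    case True
    then show ?thesis by simp
  next
    case False
    then have x: "x \<in> set ys"
      using Cons.prems by auto
    have "indep M (set ys)"
      using Cons.prems(2) by (rule indep_subset) auto
    then have "foldr (*) (map h (y#ys)) 1 = (h y * h x) * foldr (*) (map h (remove1 x ys)) 1"
      using Cons.IH x Cons.prems by (simp add: mult.assoc)
    also have "h y * h x = h x * h y"
      using Cons.prems(2) x by (intro commute_if_not_adj) (auto simp: indep_def)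
    finally show ?thesis
      using False by (simp add: mult.assoc)
  qed
qed

lemma foldr_mult_perm:
  assumes "distinct xs" "distinct ys" "set xs = set ys" "indep M (set xs)"
  shows "foldr (*) (map h xs) 1 = foldr (*) (map h ys) 1"
  using assms
proof (induction xs arbitrary: ys)
  case Nil
  then show ?case by simp
next
  case (Cons x xs)
  have x: "x \<in> set ys"
    using Cons.prems by auto
  have "foldr (*) (map h xs) 1 = foldr (*) (map h (remove1 x ys)) 1"
  proof (rule Cons.IH)
    show "indep M (set xs)"
      using Cons.prems(4) by (rule indep_subset) auto
  qed (use Cons.prems in \<open>auto simp: set_remove1_eq\<close>)
  then show ?case
    using foldr_mult_remove1[OF Cons.prems(2) _ x] Cons.prems by simp
qed

lemma hprod_eq_foldr:
  assumes "indep M S" "distinct xs" "set xs = S"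
  shows "hprod h S = foldr (*) (map h xs) 1"
proof -
  have "\<exists>ys. distinct ys \<and> set ys = S"
    using assms by blast
  then have "distinct (SOME ys. distinct ys \<and> set ys = S) \<and> set (SOME ys. distinct ys \<and> set ys = S) = S"
    by (rule someI_ex)
  then show ?thesis
    unfolding hprod_def using assms by (intro foldr_mult_perm) auto
qed

lemma hprod_insert:
  assumes "indep M (insert x S)" "x \<notin> S"
  shows "hprod h (insert x S) = h x * hprod h S"
proof -
  have "finite S"
    using indep_finite[OF assms(1)] by simp
  then obtain xs where xs: "distinct xs" "set xs = S"
    using finite_distinct_list by blast
  have "indep M S"
    using assms(1) by (rule indep_subset) auto
  then show ?thesis
    using hprod_eq_foldr[OF assms(1), of "x#xs"] hprod_eq_foldr[OF _ xs] xs assms(2) by simp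
qed

lemma hprod_union:
  assumes "indep M (A \<union> B)" "A \<inter> B = {}"
  shows "hprod h (A \<union> B) = hprod h A * hprod h B"
proof -
  have "finite A"
    using indep_finite[OF assms(1)] by simp
  then show ?thesis
    using assms
  proof (induction A rule: finite_induct)
    case empty
    then show ?case by simp
  next
    case (insert x F)
    have xF: "indep M (insert x F)"
      using insert.prems(1) by (rule indep_subset) auto
    have "hprod h (insert x F \<union> B) = h x * hprod h (F \<union> B)"
      using insert hprod_insert[of x "F \<union> B"] by auto
    also have "hprod h (F \<union> B) = hprod h F * hprod h B"
      using insert by (intro insert.IH) (auto elim: indep_subset)
    also have "h x * (hprod h F * hprod h B) = hprod h (insert x F) * hprod h B"
      using hprod_insert[OF xF insert.hyps(2)] by (simp add: mult.assoc)
    finally show ?case .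
  qed
qed

lemma hprod_mult_generator:
  assumes "indep M S" "v \<in> verts M"
  shows "hprod h S * h v =
    (if even (card (S \<inter> nbhd v)) then h v * hprod h S else - (h v * hprod h S))"
proof -
  have "finite S"
    using assms(1) by (rule indep_finite)
  then show ?thesis
    using assms(1)
  proof (induction S rule: finite_induct)
    case empty
    then show ?case by simp
  next
    case (insert x F)
    have F: "indep M F"
      using insert.prems by (rule indep_subset) auto
    have x: "x \<in> verts M"
      using insert.prems by (auto simp: indep_def)
    have card: "card (insert x F \<inter> nbhd v) = card (F \<inter> nbhd v) + (if adj v x then 1 else 0)"
      using insert.hyps by (auto simp: nbhd_def)
    have hx: "h x * h v = (if adj v x then - (h v * h x) else h v * h x)"
      using anticommute[OF x assms(2)] commute_if_not_adj[OF x assms(2)] adj_sym[of v x] by auto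
    have "hprod h (insert x F) * h v = h x * (hprod h F * h v)"
      using hprod_insert[OF insert.prems insert.hyps(2)] by (simp add: mult.assoc)
    also have "\<dots> = (if even (card (F \<inter> nbhd v)) then (h x * h v) * hprod h F
                       else - ((h x * h v) * hprod h F))"
      using insert.IH[OF F] by (simp add: mult.assoc)
    also have "\<dots> = (if even (card (insert x F \<inter> nbhd v)) then h v * hprod h (insert x F)
                       else - (h v * hprod h (insert x F)))"
      unfolding card hx hprod_insert[OF insert.prems insert.hyps(2)] by (auto simp: mult.assoc)
    finally show ?case .
  qed
qed

end

section \<open>Vertex--set pairs\<close>

definition nbhd_pairs :: "int \<Rightarrow> nat \<Rightarrow> nat \<Rightarrow> (gen \<times> gen set) set" where
  "nbhd_pairs M k c =
    {(v, S). v \<in> verts M \<and> indep M S \<and> card S = k \<and> card (S \<inter> nbhd v) = c}"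

lemma finite_nbhd_pairs: "finite (nbhd_pairs M k c)"
proof -
  have "nbhd_pairs M k c \<subseteq> verts M \<times> Pow (verts M)"
    by (auto simp: nbhd_pairs_def indep_def)
  then show ?thesis
    using finite_verts by (auto intro: finite_subset)
qed

lemma odd_nbhd_pairs:
  "{p \<in> verts M \<times> {S. indep M S \<and> card S = k}. odd (card (snd p \<inter> nbhd (fst p)))}
     = nbhd_pairs M k 1 \<union> nbhd_pairs M k 3"
proof -
  have one_or_three: "card (S \<inter> nbhd v) = 1 \<or> card (S \<inter> nbhd v) = 3"
    if "indep M S" "odd (card (S \<inter> nbhd v))" for v S
    using card_indep_inter_nbhd_le_3[OF that(1), of v] that(2) by presburger
  show ?thesis
    by (auto simp: nbhd_pairs_def dest: one_or_three)
qed

lemma nbhd_pairs_3_empty: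
  assumes "k < 3"
  shows "nbhd_pairs M k 3 = {}"
proof -
  have False if "indep M S" "card S = k" "card (S \<inter> nbhd v) = 3" for S v
    using card_mono[OF indep_finite[OF that(1)], of "S \<inter> nbhd v"] that assms by auto
  then show ?thesis
    unfolding nbhd_pairs_def by blast
qed

definition swap_neighbour :: "gen \<times> gen set \<Rightarrow> gen \<times> gen set" where
  "swap_neighbour p =
    (let u = the_elem (snd p \<inter> nbhd (fst p)) in (u, insert (fst p) (snd p - {u})))"

lemma nbhd_pairs_1_neighbour:
  assumes "(v, S) \<in> nbhd_pairs M k 1"
  obtains u where "S \<inter> nbhd v = {u}" "u \<in> S" "adj v u" "u \<in> verts M" "v \<notin> S"
    "swap_neighbour (v, S) = (u, insert v (S - {u}))"
proof -
  obtain u where u: "S \<inter> nbhd v = {u}"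
    using assms by (auto simp: nbhd_pairs_def card_1_singleton_iff)
  then have "u \<in> S" "adj v u"
    by (auto simp: nbhd_def)
  with assms show ?thesis
    using that[OF u] by (auto simp: nbhd_pairs_def indep_def swap_neighbour_def u)
qed

lemma indep_exchange_neighbour:
  assumes "indep M S" "v \<in> verts M" "S \<inter> nbhd v = {u}"
  shows "indep M (insert v (S - {u}))"
  unfolding indep_def
proof (intro conjI ballI)
  show "insert v (S - {u}) \<subseteq> verts M"
    using assms(1,2) by (auto simp: indep_def)
  have not_adj_v: "\<not> adj v w" if "w \<in> S" "w \<noteq> u" for w
    using assms(3) that by (auto simp: nbhd_def)
  fix a b assume "a \<in> insert v (S - {u})" "b \<in> insert v (S - {u})"
  then show "\<not> adj a b"
    using not_adj_v assms(1) adj_sym[of a b] by (auto simp: indep_def)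
qed

lemma swap_neighbour_nbhd_pairs:
  assumes p: "(v, S) \<in> nbhd_pairs M k 1"
  shows "swap_neighbour (v, S) \<in> nbhd_pairs M k 1"
    and "swap_neighbour (swap_neighbour (v, S)) = (v, S)"
    and "swap_neighbour (v, S) \<noteq> (v, S)"
proof -
  obtain u where u: "S \<inter> nbhd v = {u}" "u \<in> S" "adj v u" "u \<in> verts M" "v \<notin> S"
    and swap: "swap_neighbour (v, S) = (u, insert v (S - {u}))"
    using nbhd_pairs_1_neighbour[OF p] by blast
  from p have S: "v \<in> verts M" "indep M S" "card S = k"
    by (auto simp: nbhd_pairs_def)
  define S' where "S' = insert v (S - {u})"
  have S': "indep M S'"
    using indep_exchange_neighbour[OF S(2,1) u(1)] by (simp add: S'_def)
  have "finite S"
    using S(2) by (rule indep_finite)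
  then have "card S' = Suc (card (S - {u}))"
    using u(5) by (simp add: S'_def)
  also have "\<dots> = k"
    using card.remove[OF \<open>finite S\<close> u(2)] S(3) by simp
  finally have "card S' = k" .
  have nbhd_u: "S' \<inter> nbhd u = {v}"
  proof -
    have "\<not> adj u w" if "w \<in> S - {u}" for w
      using S(2) u(2) that by (auto simp: indep_def)
    then show ?thesis
      using u(3) adj_sym[of u v] by (auto simp: S'_def nbhd_def)
  qed
  then show "swap_neighbour (v, S) \<in> nbhd_pairs M k 1"
    using swap S' u(4) \<open>card S' = k\<close> by (simp add: nbhd_pairs_def S'_def)
  have "swap_neighbour (u, S') = (v, insert u (S' - {v}))"
    using nbhd_u by (simp add: swap_neighbour_def)
  also have "insert u (S' - {v}) = S"
    using u by (auto simp: S'_def)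
  finally show "swap_neighbour (swap_neighbour (v, S)) = (v, S)"
    using swap by (simp add: S'_def)
  show "swap_neighbour (v, S) \<noteq> (v, S)"
    using swap u(3) by auto
qed

definition present_claws :: "int \<Rightarrow> int \<Rightarrow> nat set" where
  "present_claws M m = {i. i < 4 \<and> closed_claw i m \<subseteq> verts M}"

definition claw_complements :: "int \<Rightarrow> nat \<Rightarrow> int \<Rightarrow> gen set set" where
  "claw_complements M k m = {R. indep M R \<and> card R = k - 3 \<and> (\<forall>w\<in>R. \<not> near_claw m w)}"

definition claw_configs :: "int \<Rightarrow> nat \<Rightarrow> (int \<times> nat \<times> gen set) set" where
  "claw_configs M k =
    (SIGMA m:{2..M div 2 - 2}. present_claws M m \<times> claw_complements M k m)"

definition claw_config_pair :: "int \<times> nat \<times> gen set \<Rightarrow> gen \<times> gen set" where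
  "claw_config_pair x = (case x of (m, i, R) \<Rightarrow> (claw_centre i m, claw_leaves i m \<union> R))"

lemma finite_present_claws: "finite (present_claws M m)"
  by (auto simp: present_claws_def)

lemma finite_claw_complements: "finite (claw_complements M k m)"
proof -
  have "claw_complements M k m \<subseteq> Pow (verts M)"
    by (auto simp: claw_complements_def indep_def)
  then show ?thesis
    using finite_verts by (auto intro: finite_subset)
qed

lemma claw_leaves_union_complement:
  assumes i: "i \<in> present_claws M m" and R: "R \<in> claw_complements M k m" and k: "3 \<le> k"
  shows "claw_leaves i m \<inter> R = {}" "indep M (claw_leaves i m \<union> R)"
    "card (claw_leaves i m \<union> R) = k" "(claw_leaves i m \<union> R) \<inter> nbhd (claw_centre i m) = claw_leaves i m"
    "claw_centre i m \<in> verts M"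
proof -
  have i4: "i < 4" and closed: "closed_claw i m \<subseteq> verts M"
    using i by (auto simp: present_claws_def)
  have iR: "indep M R" and cR: "card R = k - 3" and far: "\<And>w. w \<in> R \<Longrightarrow> \<not> near_claw m w"
    using R by (auto simp: claw_complements_def)
  have near: "near_claw m w" if "w \<in> closed_claw i m \<or> (\<exists>t\<in>closed_claw i m. adj t w)" for w
    using closed_claw_nbhd_iff_near_claw[OF i4] that by blast
  have sub: "claw_leaves i m \<subseteq> closed_claw i m" "claw_centre i m \<in> closed_claw i m"
    by (auto simp: closed_claw_def)
  show disj: "claw_leaves i m \<inter> R = {}"
    using near far sub by blast
  show "claw_centre i m \<in> verts M"
    using closed sub by blast
  have "\<not> adj a b" if "a \<in> claw_leaves i m \<union> R" "b \<in> claw_leaves i m \<union> R" for a b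
  proof -
    have "\<not> adj a b" if "a \<in> claw_leaves i m" "b \<in> R" for a b
      using near[of b] far[of b] sub that by blast
    then show ?thesis
      using that claw_leaves_not_adj[OF i4] iR adj_sym[of a b] by (auto simp: indep_def)
  qed
  then show "indep M (claw_leaves i m \<union> R)"
    using closed sub iR by (auto simp: indep_def)
  show "card (claw_leaves i m \<union> R) = k"
    using card_Un_disjoint[OF _ indep_finite[OF iR] disj] card_claw_leaves[OF i4] cR k
    by (simp add: claw_leaves_def)
  have "R \<inter> nbhd (claw_centre i m) = {}"
    using near far sub by (auto simp: nbhd_def)
  then show "(claw_leaves i m \<union> R) \<inter> nbhd (claw_centre i m) = claw_leaves i m"
    using claw_leaves_adj_centre[OF i4] by (auto simp: nbhd_def)
qed

lemma inj_on_claw_config_pair: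
  assumes "3 \<le> k"
  shows "inj_on claw_config_pair (claw_configs M k)"
proof
  fix x y assume x: "x \<in> claw_configs M k" and y: "y \<in> claw_configs M k"
    and eq: "claw_config_pair x = claw_config_pair y"
  obtain m i R where x_def: "x = (m, i, R)" and i: "i \<in> present_claws M m" "R \<in> claw_complements M k m"
    using x by (auto simp: claw_configs_def)
  obtain m' i' R' where y_def: "y = (m', i', R')" and i': "i' \<in> present_claws M m'" "R' \<in> claw_complements M k m'"
    using y by (auto simp: claw_configs_def)
  note x_props = claw_leaves_union_complement[OF i assms]
  note y_props = claw_leaves_union_complement[OF i' assms]
  have centre: "claw_centre i m = claw_centre i' m'" and U: "claw_leaves i m \<union> R = claw_leaves i' m' \<union> R'"
    using eq x_def y_def by (auto simp: claw_config_pair_def)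
  have "claw_leaves i m = claw_leaves i' m'"
    using x_props(4) y_props(4) centre U by simp
  then have "i = i'" "m = m'"
    using claw_inj centre i(1) i'(1) by (auto simp: present_claws_def)
  moreover have "R = R'"
    using U x_props(1) y_props(1) \<open>i = i'\<close> \<open>m = m'\<close> by blast
  ultimately show "x = y"
    using x_def y_def by simp
qed

lemma nbhd_pairs_3_claw:
  assumes "(v, S) \<in> nbhd_pairs M k 3"
  obtains i m where "i < 4" "v = claw_centre i m" "S \<inter> nbhd v = claw_leaves i m"
proof -
  have S: "indep M S" and three: "card (S \<inter> nbhd v) = 3"
    using assms by (auto simp: nbhd_pairs_def)
  obtain x y z where T: "S \<inter> nbhd v = {x,y,z}" and "x \<noteq> y" "y \<noteq> z" "x \<noteq> z"
    using three card_3_iff by metis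
  then have "is_claw v x y z"
    using S unfolding is_claw_def indep_def nbhd_def by blast
  then show ?thesis
    using T that claw_in_leaf_triples leaf_triples_claw_leaves by metis
qed

lemma nbhd_pairs_3_claw_config:
  assumes p: "(v, S) \<in> nbhd_pairs M k 3"
  shows "(v, S) \<in> claw_config_pair ` claw_configs M k"
proof -
  have v: "v \<in> verts M" and S: "indep M S" "card S = k"
    using p by (auto simp: nbhd_pairs_def)
  obtain i m where i: "i < 4" and centre: "v = claw_centre i m"
    and leaves: "S \<inter> nbhd v = claw_leaves i m"
    using nbhd_pairs_3_claw[OF p] .
  have leaves_S: "claw_leaves i m \<subseteq> S"
    using leaves by blast
  obtain t where "t \<in> claw_leaves i m"
    using card_claw_leaves[OF i, of m] by (metis card.empty ex_in_conv zero_neq_numeral)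
  then have "v \<notin> S"
    using leaves S(1) by (auto simp: indep_def nbhd_def)
  have closed: "closed_claw i m \<subseteq> verts M"
    using v S(1) leaves_S centre by (auto simp: closed_claw_def indep_def)
  define R where "R = S - claw_leaves i m"
  have "R \<in> claw_complements M k m"
    unfolding claw_complements_def
  proof (intro CollectI conjI ballI)
    show "indep M R"
      using S(1) by (rule indep_subset) (auto simp: R_def)
    show "card R = k - 3"
      using card_Diff_subset[OF finite_subset[OF leaves_S indep_finite[OF S(1)]] leaves_S]
        S(2) card_claw_leaves[OF i] by (simp add: R_def)
    fix w assume w: "w \<in> R"
    have "w \<notin> closed_claw i m"
      using w \<open>v \<notin> S\<close> centre by (auto simp: R_def closed_claw_def)
    moreover have "\<not> adj v w"
      using w leaves by (auto simp: R_def nbhd_def)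
    moreover have "\<not> adj t w" if "t \<in> claw_leaves i m" for t
      using w leaves_S S(1) that by (auto simp: R_def indep_def)
    ultimately show "\<not> near_claw m w"
      using closed_claw_nbhd_iff_near_claw[OF i, of w m] centre by (auto simp: closed_claw_def)
  qed
  moreover have "m \<in> {2..M div 2 - 2}"
    using closed_claw_in_verts_range[OF i closed] by simp
  ultimately have "(m, i, R) \<in> claw_configs M k"
    using i closed by (simp add: claw_configs_def present_claws_def)
  moreover have "claw_config_pair (m, i, R) = (v, S)"
    using centre leaves_S by (auto simp: claw_config_pair_def R_def)
  ultimately show ?thesis
    by (metis image_eqI)
qed

lemma bij_betw_claw_config_pair:
  assumes "3 \<le> k"
  shows "bij_betw claw_config_pair (claw_configs M k) (nbhd_pairs M k 3)"
proof -
  have "claw_config_pair x \<in> nbhd_pairs M k 3" if "x \<in> claw_configs M k" for x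
    using that claw_leaves_union_complement[OF _ _ assms] card_claw_leaves
    by (auto simp: claw_configs_def claw_config_pair_def nbhd_pairs_def present_claws_def)
  moreover have "nbhd_pairs M k 3 \<subseteq> claw_config_pair ` claw_configs M k"
    using nbhd_pairs_3_claw_config by fast
  ultimately show ?thesis
    using inj_on_claw_config_pair[OF assms] unfolding bij_betw_def by blast
qed

lemma claw_leaves_indep: "i < 4 \<Longrightarrow> closed_claw i m \<subseteq> verts M \<Longrightarrow> indep M (claw_leaves i m)"
  using claw_leaves_not_adj by (auto simp: indep_def closed_claw_def)

lemma hh_in_verts: "GH j \<in> verts M \<Longrightarrow> hh M h j = h (GH j)"
  by (simp add: hh_def del: GH_in_verts)

lemma hb_in_verts: "GB j \<in> verts M \<Longrightarrow> hb M h j = h (GB j)"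
  by (simp add: hb_def del: GB_in_verts)

section \<open>The commutator\<close>

context ffd_generators
begin

definition pair_term :: "gen \<times> gen set \<Rightarrow> 'a" where
  "pair_term p = h (fst p) * hprod h (snd p)"

lemma commutator_generator_hprod:
  assumes "indep M S" "v \<in> verts M"
  shows "h v * hprod h S - hprod h S * h v =
    (if odd (card (S \<inter> nbhd v)) then 2 * pair_term (v, S) else 0)"
  using hprod_mult_generator[OF assms] by (simp add: pair_term_def mult_2)

lemma commutator_charge:
  "charge M h 1 * charge M h k - charge M h k * charge M h 1 =
     2 * (sum pair_term (nbhd_pairs M k 1) + sum pair_term (nbhd_pairs M k 3))"
proof -
  define I where "I = {S. indep M S \<and> card S = k}"
  have "finite I"
    using finite_verts unfolding I_def indep_def by (auto intro: finite_subset[of _ "Pow (verts M)"])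
  have "charge M h 1 * charge M h k - charge M h k * charge M h 1
      = (\<Sum>v\<in>verts M. \<Sum>S\<in>I. h v * hprod h S - hprod h S * h v)"
    unfolding charge_one charge_def[of M h k] I_def[symmetric]
    by (simp add: sum_product sum_subtractf sum.swap[of _ I])
  also have "\<dots> = (\<Sum>p\<in>verts M \<times> I. if odd (card (snd p \<inter> nbhd (fst p))) then 2 * pair_term p else 0)"
    unfolding sum.cartesian_product
    by (intro sum.cong refl) (auto simp: I_def commutator_generator_hprod)
  also have "\<dots> = (\<Sum>p\<in>nbhd_pairs M k 1 \<union> nbhd_pairs M k 3. 2 * pair_term p)"
    using finite_verts \<open>finite I\<close> by (simp add: sum.inter_filter[symmetric] odd_nbhd_pairs I_def)
  also have "\<dots> = 2 * (sum pair_term (nbhd_pairs M k 1) + sum pair_term (nbhd_pairs M k 3))"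
  proof -
    have "nbhd_pairs M k 1 \<inter> nbhd_pairs M k 3 = {}"
      by (auto simp: nbhd_pairs_def)
    then show ?thesis
      by (simp add: sum.union_disjoint finite_nbhd_pairs sum_distrib_left)
  qed
  finally show ?thesis .
qed

lemma pair_term_swap_neighbour:
  assumes p: "(v, S) \<in> nbhd_pairs M k 1"
  shows "pair_term (swap_neighbour (v, S)) + pair_term (v, S) = 0"
proof -
  obtain u where u: "u \<in> S" "adj v u" "u \<in> verts M" "v \<notin> S"
    and swap: "swap_neighbour (v, S) = (u, insert v (S - {u}))"
    using nbhd_pairs_1_neighbour[OF p] by blast
  have v: "v \<in> verts M" and S: "indep M S"
    using p by (auto simp: nbhd_pairs_def)
  have "indep M (insert v (S - {u}))"
    using swap_neighbour_nbhd_pairs(1)[OF p] swap by (simp add: nbhd_pairs_def)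
  then have "pair_term (swap_neighbour (v, S)) = h u * (h v * hprod h (S - {u}))"
    using swap u(4) by (simp add: pair_term_def hprod_insert)
  also have "\<dots> = - (h v * (h u * hprod h (S - {u})))"
    using anticommute[OF u(3) v] adj_sym[of u v] u(2) by (simp add: mult.assoc[symmetric])
  also have "h u * hprod h (S - {u}) = hprod h S"
    using hprod_insert[of u "S - {u}"] S u(1) by (simp add: insert_absorb)
  finally show ?thesis
    by (simp add: pair_term_def)
qed

lemma sum_nbhd_pairs_1: "sum pair_term (nbhd_pairs M k 1) = 0"
proof (rule sum_involution_eq_0[where h = swap_neighbour])
  fix p assume p: "p \<in> nbhd_pairs M k 1"
  obtain v S where "p = (v, S)"
    by fastforce
  with p show "pair_term (swap_neighbour p) + pair_term p = 0"
    and "swap_neighbour p \<in> nbhd_pairs M k 1" "swap_neighbour (swap_neighbour p) = p"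
    and "swap_neighbour p \<noteq> p"
    using pair_term_swap_neighbour swap_neighbour_nbhd_pairs by blast+
qed

definition claw_term :: "nat \<Rightarrow> int \<Rightarrow> 'a" where
  "claw_term i m = pair_term (claw_centre i m, claw_leaves i m)"

lemma hprod_triple:
  assumes "indep M {x, y, z}" "x \<noteq> y" "x \<noteq> z" "y \<noteq> z"
  shows "hprod h {x, y, z} = h x * (h y * h z)"
proof -
  have "indep M {y, z}" "z \<in> verts M"
    using assms(1) by (auto simp: indep_def)
  then show ?thesis
    using assms by (simp add: hprod_insert)
qed

lemma mult_left_commute_generators:
  "u \<in> verts M \<Longrightarrow> w \<in> verts M \<Longrightarrow> \<not> adj u w \<Longrightarrow> h u * (h w * r) = h w * (h u * r)"
  using commute_if_not_adj[of u w] by (simp add: mult.assoc[symmetric])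

lemma mult_left_anticommute_generators:
  "u \<in> verts M \<Longrightarrow> w \<in> verts M \<Longrightarrow> adj u w \<Longrightarrow> h u * (h w * r) = - (h w * (h u * r))"
  using anticommute[of u w] by (simp add: mult.assoc[symmetric])

lemma claw_monomial_0:
  "hh M h (2*m) * hh M h (2*m-3) * (hh M h (2*m-1) * hb M h (2*m+5)) = (if closed_claw 0 m \<subseteq> verts M then claw_term 0 m else 0)"
proof (cases "closed_claw 0 m \<subseteq> verts M")
  case True
  let ?c = "GH (2*m-1)" and ?x = "GH (2*m-3)" and ?y = "GH (2*m)" and ?z = "GB (2*m+5)"
  have V: "?c \<in> verts M" "?x \<in> verts M" "?y \<in> verts M" "?z \<in> verts M"
    using True by (simp_all only: closed_claw_def claw_leaves_def claw_centre_def insert_subset) simp_all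
  have "indep M {?x, ?y, ?z}"
    using claw_leaves_indep[OF _ True] by (simp add: claw_leaves_def)
  then have leaves: "hprod h {?x, ?y, ?z} = h ?x * (h ?y * h ?z)"
    by (rule hprod_triple) simp_all
  have yx: "\<And>r. h ?y * (h ?x * r) = h ?x * (h ?y * r)"
    using mult_left_commute_generators[of ?y ?x] V by simp
  have yc: "\<And>r. h ?y * (h ?c * r) = - (h ?c * (h ?y * r))"
    using mult_left_anticommute_generators[of ?y ?c] V by simp
  have xc: "\<And>r. h ?x * (h ?c * r) = - (h ?c * (h ?x * r))"
    using mult_left_anticommute_generators[of ?x ?c] V by simp
  show ?thesis
    using True V
    by (simp add: claw_term_def pair_term_def leaves claw_centre_def claw_leaves_def hh_in_verts hb_in_verts mult.assoc yx yc xc)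
next
  case False
  then show ?thesis
    by (auto simp: hh_def hb_def closed_claw_def claw_leaves_def claw_centre_def)
qed

lemma claw_monomial_1:
  "hh M h (2*m-2) * hb M h (2*m+1) * (hh M h (2*m-1) * hb M h (2*m+5)) = (if closed_claw 1 m \<subseteq> verts M then claw_term 1 m else 0)"
proof (cases "closed_claw 1 m \<subseteq> verts M")
  case True
  let ?c = "GH (2*m-1)" and ?x = "GH (2*m-2)" and ?y = "GB (2*m+1)" and ?z = "GB (2*m+5)"
  have V: "?c \<in> verts M" "?x \<in> verts M" "?y \<in> verts M" "?z \<in> verts M"
    using True by (simp_all only: closed_claw_def claw_leaves_def claw_centre_def insert_subset) simp_all
  have "indep M {?x, ?y, ?z}"
    using claw_leaves_indep[OF _ True] by (simp add: claw_leaves_def)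
  then have leaves: "hprod h {?x, ?y, ?z} = h ?x * (h ?y * h ?z)"
    by (rule hprod_triple) simp_all
  have yc: "\<And>r. h ?y * (h ?c * r) = - (h ?c * (h ?y * r))"
    using mult_left_anticommute_generators[of ?y ?c] V by simp
  have xc: "\<And>r. h ?x * (h ?c * r) = - (h ?c * (h ?x * r))"
    using mult_left_anticommute_generators[of ?x ?c] V by simp
  show ?thesis
    using True V
    by (simp add: claw_term_def pair_term_def leaves claw_centre_def claw_leaves_def hh_in_verts hb_in_verts mult.assoc yc xc)
next
  case False
  then show ?thesis
    by (auto simp: hh_def hb_def closed_claw_def claw_leaves_def claw_centre_def)
qed

lemma claw_monomial_2:
  "hh M h (2*m-3) * hb M h (2*m+3) * (hh M h (2*m+4) * hh M h (2*m+1)) = - (if closed_claw 2 m \<subseteq> verts M then claw_term 2 m else 0)"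
proof (cases "closed_claw 2 m \<subseteq> verts M")
  case True
  let ?c = "GB (2*m+3)" and ?x = "GH (2*m-3)" and ?y = "GH (2*m+1)" and ?z = "GH (2*m+4)"
  have V: "?c \<in> verts M" "?x \<in> verts M" "?y \<in> verts M" "?z \<in> verts M"
    using True by (simp_all only: closed_claw_def claw_leaves_def claw_centre_def insert_subset) simp_all
  have "indep M {?x, ?y, ?z}"
    using claw_leaves_indep[OF _ True] by (simp add: claw_leaves_def)
  then have leaves: "hprod h {?x, ?y, ?z} = h ?x * (h ?y * h ?z)"
    by (rule hprod_triple) simp_all
  have zy: "h ?z * h ?y = h ?y * h ?z"
    using commute_if_not_adj[of ?z ?y] V by simp
  have xc: "\<And>r. h ?x * (h ?c * r) = - (h ?c * (h ?x * r))"
    using mult_left_anticommute_generators[of ?x ?c] V by simp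
  show ?thesis
    using True V
    by (simp add: claw_term_def pair_term_def leaves claw_centre_def claw_leaves_def hh_in_verts hb_in_verts mult.assoc zy xc)
next
  case False
  then show ?thesis
    by (auto simp: hh_def hb_def closed_claw_def claw_leaves_def claw_centre_def)
qed

lemma claw_monomial_3:
  "hh M h (2*m-3) * hb M h (2*m+3) * (hh M h (2*m+2) * hb M h (2*m+5)) = - (if closed_claw 3 m \<subseteq> verts M then claw_term 3 m else 0)"
proof (cases "closed_claw 3 m \<subseteq> verts M")
  case True
  let ?c = "GB (2*m+3)" and ?x = "GH (2*m-3)" and ?y = "GH (2*m+2)" and ?z = "GB (2*m+5)"
  have V: "?c \<in> verts M" "?x \<in> verts M" "?y \<in> verts M" "?z \<in> verts M"
    using True by (simp_all only: closed_claw_def claw_leaves_def claw_centre_def insert_subset) simp_all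
  have "indep M {?x, ?y, ?z}"
    using claw_leaves_indep[OF _ True] by (simp add: claw_leaves_def)
  then have leaves: "hprod h {?x, ?y, ?z} = h ?x * (h ?y * h ?z)"
    by (rule hprod_triple) simp_all
  have xc: "\<And>r. h ?x * (h ?c * r) = - (h ?c * (h ?x * r))"
    using mult_left_anticommute_generators[of ?x ?c] V by simp
  show ?thesis
    using True V
    by (simp add: claw_term_def pair_term_def leaves claw_centre_def claw_leaves_def hh_in_verts hb_in_verts mult.assoc xc)
next
  case False
  then show ?thesis
    by (auto simp: hh_def hb_def closed_claw_def claw_leaves_def claw_centre_def)
qed

lemma sum_claw_terms:
  "(\<Sum>i\<in>present_claws M m. claw_term i m) = Aop M h m * Cop M h (m+1) - Cop M h m * Aop M h (m+2)"
proof -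
  have "(\<Sum>i\<in>present_claws M m. claw_term i m)
      = (\<Sum>i\<in>{..<4}. if closed_claw i m \<subseteq> verts M then claw_term i m else 0)"
    unfolding present_claws_def sum.inter_filter[OF finite_lessThan, symmetric]
    by (simp add: lessThan_def)
  also have "{..<4::nat} = {0, 1, 2, 3}"
    by auto
  finally have sum: "(\<Sum>i\<in>present_claws M m. claw_term i m)
      = (if closed_claw 0 m \<subseteq> verts M then claw_term 0 m else 0)
      + (if closed_claw 1 m \<subseteq> verts M then claw_term 1 m else 0)
      + (if closed_claw 2 m \<subseteq> verts M then claw_term 2 m else 0)
      + (if closed_claw 3 m \<subseteq> verts M then claw_term 3 m else 0)"
    by (simp add: add.assoc)
  have A_C: "Aop M h m * Cop M h (m+1) = hh M h (2*m) * hh M h (2*m-3) * (hh M h (2*m-1) * hb M h (2*m+5))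
      + hh M h (2*m-2) * hb M h (2*m+1) * (hh M h (2*m-1) * hb M h (2*m+5))"
    by (simp add: Aop_def Cop_def distrib_right algebra_simps)
  have C_A: "Cop M h m * Aop M h (m+2) = hh M h (2*m-3) * hb M h (2*m+3) * (hh M h (2*m+4) * hh M h (2*m+1))
      + hh M h (2*m-3) * hb M h (2*m+3) * (hh M h (2*m+2) * hb M h (2*m+5))"
    by (simp add: Aop_def Cop_def distrib_left algebra_simps)
  show ?thesis
    unfolding sum A_C C_A claw_monomial_0 claw_monomial_1 claw_monomial_2 claw_monomial_3
    by (simp add: algebra_simps)
qed

lemma sum_nbhd_pairs_3:
  assumes "3 \<le> k"
  shows "sum pair_term (nbhd_pairs M k 3) = (\<Sum>m\<in>{2..M div 2 - 2}. \<Sum>R\<in>claw_complements M k m.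
           (\<Sum>i\<in>present_claws M m. claw_term i m) * hprod h R)"
proof -
  have "sum pair_term (nbhd_pairs M k 3) = sum (pair_term \<circ> claw_config_pair) (claw_configs M k)"
    using sum.reindex_bij_betw[OF bij_betw_claw_config_pair[OF assms], of pair_term] by simp
  also have "\<dots> = (\<Sum>m\<in>{2..M div 2 - 2}. \<Sum>y\<in>present_claws M m \<times> claw_complements M k m.
                       pair_term (claw_config_pair (m, y)))"
    unfolding claw_configs_def
    by (subst sum.Sigma) (auto simp: finite_present_claws finite_claw_complements split_def)
  also have "\<dots> = (\<Sum>m\<in>{2..M div 2 - 2}. \<Sum>i\<in>present_claws M m. \<Sum>R\<in>claw_complements M k m.
                       pair_term (claw_config_pair (m, i, R)))"
    by (simp add: sum.cartesian_product split_def)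
  also have "\<dots> = (\<Sum>m\<in>{2..M div 2 - 2}. \<Sum>i\<in>present_claws M m. \<Sum>R\<in>claw_complements M k m.
                       claw_term i m * hprod h R)"
  proof (intro sum.cong refl)
    fix m i R assume "i \<in> present_claws M m" "R \<in> claw_complements M k m"
    note props = claw_leaves_union_complement[OF this assms]
    show "pair_term (claw_config_pair (m, i, R)) = claw_term i m * hprod h R"
      using hprod_union[OF props(2,1)]
      by (simp add: claw_config_pair_def claw_term_def pair_term_def mult.assoc)
  qed
  also have "\<dots> = (\<Sum>m\<in>{2..M div 2 - 2}. \<Sum>R\<in>claw_complements M k m.
                       (\<Sum>i\<in>present_claws M m. claw_term i m) * hprod h R)"
    by (simp add: sum.swap[of _ "present_claws M _"] sum_distrib_right)
  finally show ?thesis .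
qed

end

theorem theorem1:
  fixes M :: int and h :: "gen \<Rightarrow> 'a::ring_1" and sc :: "complex \<Rightarrow> 'a"
    and b bb :: "int \<Rightarrow> complex"
  assumes M: "M \<ge> 1"
    and sc_one: "sc 1 = 1"
    and sc_add: "\<And>x y. sc (x + y) = sc x + sc y"
    and sc_mult: "\<And>x y. sc (x * y) = sc x * sc y"
    and sc_central: "\<And>c a. sc c * a = a * sc c"
    and sqH: "\<And>j. GH j \<in> verts M \<Longrightarrow> h (GH j) * h (GH j) = sc ((b j)^2)"
    and sqB: "\<And>j. GB j \<in> verts M \<Longrightarrow> h (GB j) * h (GB j) = sc ((bb j)^2)"
    and anti: "\<And>u v. u \<in> verts M \<Longrightarrow> v \<in> verts M \<Longrightarrow> adj u v \<Longrightarrow> h u * h v = - (h v * h u)"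
    and comm: "\<And>u v. u \<in> verts M \<Longrightarrow> v \<in> verts M \<Longrightarrow> u \<noteq> v \<Longrightarrow> \<not> adj u v \<Longrightarrow> h u * h v = h v * h u"
    and extra: "\<And>m. 2 \<le> m \<Longrightarrow> m \<le> M div 2 - 2 \<Longrightarrow>
                  Aop M h m * Cop M h (m + 1) = Cop M h m * Aop M h (m + 2)"
  shows "\<forall>k. charge M h 1 * charge M h k - charge M h k * charge M h 1 = 0"
  \<comment> \<open>Only the (anti)commutation relations and \<open>extra\<close> are needed; the squares of the
    generators never enter.\<close>
proof
  fix k
  interpret ffd_generators M h
    using anti comm by unfold_locales
  have "sum pair_term (nbhd_pairs M k 3) = 0"
  proof (cases "3 \<le> k")
    case True
    have "(\<Sum>i\<in>present_claws M m. claw_term i m) = 0" if "m \<in> {2..M div 2 - 2}" for m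
      using sum_claw_terms extra that by simp
    then show ?thesis
      using sum_nbhd_pairs_3[OF True] by simp
  next
    case False
    then show ?thesis
      using nbhd_pairs_3_empty by simp
  qed
  then show "charge M h 1 * charge M h k - charge M h k * charge M h 1 = 0"
    using commutator_charge sum_nbhd_pairs_1 by simp
qed

end
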